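(* Let $R$ be a commutative ring, $n\ge 2$ an integer, and $S=\{m_1,\dots,m_n\}\subseteq R\setminus(\{0\}\cup R^\times)$ a set of $n$ pairwise coprime non-zero non-units, and $m=m_1m_2\cdots m_n$. Let $V$ be the set of perfect divisors of $m$ with respect to $S$, and define $\le$ on $V$ by $a\le b$ iff $a=b$ or $a\mid b$. Then $(V,\le)$ is a partially ordered set of cardinality $|V|=2^n-2$, and the perfect divisor graph $\mathrm{pdg}(S)$ is a partial order graph.
   Context: Rings have $1\neq 0$; $R^\times$ is the unit group. Elements $a,b$ are coprime if $ra+sb=1$ for some $r,s\in R$. A perfect divisor of $m$ with respect to $S$ is an element $d\neq m$ that is a product of distinct elements of $S$ (a product $\prod_{j\in J} m_j$ with $\emptyset\neq J\subseteq\{1,\dots,n\}$). The perfect divisor graph $\mathrm{pdg}(S)$ is the simple undirected graph whose vertex set is the set of perfect divisors of $m$ with respect to $S$, two distinct vertices $a,b$ being adjacent iff $a\mid b$ or $b\mid a$. A partial order graph is a graph of the form $G_A$ for a poset $(A,\le)$: vertex set $A$, distinct $a,b$ adjacent iff $a\le b$ or $b\le a$. *)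

theory Defs
  imports Main
begin

definition bezout_coprime :: "'a::comm_ring_1 \<Rightarrow> 'a \<Rightarrow> bool" where
  "bezout_coprime a b \<longleftrightarrow> (\<exists>r s. r * a + s * b = 1)"

definition perfect_divisors :: "(nat \<Rightarrow> 'a::comm_ring_1) \<Rightarrow> nat \<Rightarrow> 'a set" where
  "perfect_divisors ms n =
     {d. (\<exists>J. J \<noteq> {} \<and> J \<subseteq> {0..<n} \<and> d = (\<Prod>j\<in>J. ms j)) \<and> d \<noteq> (\<Prod>j<n. ms j)}"

definition pd_order :: "'a::comm_ring_1 set \<Rightarrow> ('a \<times> 'a) set" where
  "pd_order V = {(a, b). a \<in> V \<and> b \<in> V \<and> (a = b \<or> a dvd b)}"

definition pdg_adj :: "'a::comm_ring_1 \<Rightarrow> 'a \<Rightarrow> bool" where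
  "pdg_adj a b \<longleftrightarrow> a \<noteq> b \<and> (a dvd b \<or> b dvd a)"

definition partial_order_graph :: "'v set \<Rightarrow> ('v \<Rightarrow> 'v \<Rightarrow> bool) \<Rightarrow> bool" where
  "partial_order_graph V E \<longleftrightarrow>
     (\<exists>r. partial_order_on V r \<and>
          (\<forall>a\<in>V. \<forall>b\<in>V. (E a b \<longleftrightarrow> a \<noteq> b \<and> ((a, b) \<in> r \<or> (b, a) \<in> r))))"

end

theory Submission
  imports Defs
begin

text \<open>Pairwise coprime non-units behave like distinct primes: \<open>m\<^sub>i\<close> can divide a product
  of the other \<open>m\<^sub>j\<close> only if it is a unit. Hence \<open>J \<mapsto> \<Prod>j\<in>J. m\<^sub>j\<close> reflects divisibility
  into inclusion, so it is injective on subsets of \<open>{0..<n}\<close>, the perfect divisors correspond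
  to the \<open>2\<^sup>n - 2\<close> nonempty proper subsets, and divisibility is antisymmetric on them.\<close>

lemma bezout_coprime_mult_right:
  fixes a b c :: "'a::comm_ring_1"
  assumes "bezout_coprime a b" "bezout_coprime a c"
  shows "bezout_coprime a (b * c)"
proof -
  obtain r s where rs: "r * a + s * b = 1"
    using assms(1) unfolding bezout_coprime_def by blast
  obtain r' s' where rs': "r' * a + s' * c = 1"
    using assms(2) unfolding bezout_coprime_def by blast
  have "(r * a + s * b) * (r' * a + s' * c) = 1"
    using rs rs' by simp
  then have "(r * r' * a + r * s' * c + s * b * r') * a + (s * s') * (b * c) = 1"
    by (simp add: algebra_simps)
  then show ?thesis
    unfolding bezout_coprime_def by blast
qed

lemma bezout_coprime_prod_right:
  fixes a :: "'a::comm_ring_1"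
  assumes "\<And>j. j \<in> K \<Longrightarrow> bezout_coprime a (f j)"
  shows "bezout_coprime a (prod f K)"
  using assms
proof (induction K rule: infinite_finite_induct)
  case (insert x F)
  then show ?case
    by (simp add: bezout_coprime_mult_right)
qed (auto simp: bezout_coprime_def intro: exI[of _ 0])

lemma bezout_coprime_dvd_imp_unit:
  fixes a b :: "'a::comm_ring_1"
  assumes "bezout_coprime a b" "a dvd b"
  shows "a dvd 1"
proof -
  obtain r s where rs: "r * a + s * b = 1"
    using assms(1) unfolding bezout_coprime_def by blast
  obtain t where "b = a * t"
    using assms(2) by blast
  with rs have "a * (r + s * t) = 1"
    by (simp add: algebra_simps)
  then show ?thesis
    by (metis dvd_triv_left)
qed

lemma prod_dvd_prod_imp_subset:
  fixes ms :: "'i \<Rightarrow> 'a::comm_ring_1"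
  assumes non_unit: "\<And>i. i \<in> I \<Longrightarrow> \<not> ms i dvd 1"
    and coprime: "\<And>i j. i \<in> I \<Longrightarrow> j \<in> I \<Longrightarrow> i \<noteq> j \<Longrightarrow> bezout_coprime (ms i) (ms j)"
    and "finite J" "J \<subseteq> I" "K \<subseteq> I"
    and dvd: "prod ms J dvd prod ms K"
  shows "J \<subseteq> K"
proof
  fix i
  assume "i \<in> J"
  show "i \<in> K"
  proof (rule ccontr)
    assume "i \<notin> K"
    have "ms i dvd prod ms J"
      using \<open>i \<in> J\<close> \<open>finite J\<close> by (rule dvd_prodI[rotated])
    then have "ms i dvd prod ms K"
      using dvd by (rule dvd_trans)
    moreover have "bezout_coprime (ms i) (prod ms K)"
      using \<open>i \<in> J\<close> \<open>i \<notin> K\<close> \<open>J \<subseteq> I\<close> \<open>K \<subseteq> I\<close>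
      by (intro bezout_coprime_prod_right coprime) auto
    ultimately have "ms i dvd 1"
      by (rule bezout_coprime_dvd_imp_unit[rotated])
    then show False
      using non_unit \<open>i \<in> J\<close> \<open>J \<subseteq> I\<close> by blast
  qed
qed

lemma dvd_antisym_on_prod_Pow:
  fixes ms :: "'i \<Rightarrow> 'a::comm_ring_1"
  assumes "finite I"
    and "\<And>i. i \<in> I \<Longrightarrow> \<not> ms i dvd 1"
    and "\<And>i j. i \<in> I \<Longrightarrow> j \<in> I \<Longrightarrow> i \<noteq> j \<Longrightarrow> bezout_coprime (ms i) (ms j)"
    and "a \<in> prod ms ` Pow I" "b \<in> prod ms ` Pow I" "a dvd b" "b dvd a"
  shows "a = b"
proof -
  obtain J K where "J \<subseteq> I" "K \<subseteq> I" and a: "a = prod ms J" and b: "b = prod ms K"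
    using assms(4,5) by blast
  moreover have "finite J" "finite K"
    using \<open>J \<subseteq> I\<close> \<open>K \<subseteq> I\<close> \<open>finite I\<close> finite_subset by auto
  ultimately have "J \<subseteq> K" "K \<subseteq> J"
    using assms(6,7) prod_dvd_prod_imp_subset[where ms = ms and I = I, OF assms(2,3)]
    by simp_all
  then show "a = b"
    by (simp add: a b)
qed

lemma inj_on_prod_Pow:
  fixes ms :: "'i \<Rightarrow> 'a::comm_ring_1"
  assumes "finite I"
    and "\<And>i. i \<in> I \<Longrightarrow> \<not> ms i dvd 1"
    and "\<And>i j. i \<in> I \<Longrightarrow> j \<in> I \<Longrightarrow> i \<noteq> j \<Longrightarrow> bezout_coprime (ms i) (ms j)"
  shows "inj_on (prod ms) (Pow I)"
proof (rule inj_onI)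
  fix J K
  assume "J \<in> Pow I" "K \<in> Pow I" "prod ms J = prod ms K"
  then have "J \<subseteq> I" "K \<subseteq> I" "finite J" "finite K"
    using \<open>finite I\<close> finite_subset by auto
  with \<open>prod ms J = prod ms K\<close> show "J = K"
    using prod_dvd_prod_imp_subset[where ms = ms and I = I, OF assms(2,3)]
    by (metis dvd_refl subset_antisym)
qed

lemma card_Pow_minus_empty_and_full:
  assumes "finite A"
  shows "card (Pow A - {{}, A}) = 2 ^ card A - 2"
proof (cases "A = {}")
  case False
  then have "card {{}, A} = 2"
    by simp
  with assms show ?thesis
    by (subst card_Diff_subset) (auto simp: card_Pow)
qed simp

lemma perfect_divisors_eq_image:
  fixes ms :: "nat \<Rightarrow> 'a::comm_ring_1"
  assumes inj: "inj_on (prod ms) (Pow {0..<n})"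
  shows "perfect_divisors ms n = prod ms ` (Pow {0..<n} - {{}, {0..<n}})"
proof (rule set_eqI)
  fix d
  have "(\<Prod>j<n. ms j) = prod ms {0..<n}"
    by (simp add: lessThan_atLeast0)
  then have "d \<in> perfect_divisors ms n \<longleftrightarrow>
      (\<exists>J. J \<noteq> {} \<and> J \<subseteq> {0..<n} \<and> d = prod ms J) \<and> d \<noteq> prod ms {0..<n}"
    unfolding perfect_divisors_def by simp
  also have "\<dots> \<longleftrightarrow> (\<exists>J \<in> Pow {0..<n} - {{}, {0..<n}}. d = prod ms J)"
    using inj_onD[OF inj] by blast
  finally show "d \<in> perfect_divisors ms n \<longleftrightarrow> d \<in> prod ms ` (Pow {0..<n} - {{}, {0..<n}})"
    by (simp add: image_iff)
qed

lemma partial_order_on_pd_order: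
  assumes "\<And>a b. a \<in> V \<Longrightarrow> b \<in> V \<Longrightarrow> a dvd b \<Longrightarrow> b dvd a \<Longrightarrow> a = b"
  shows "partial_order_on V (pd_order V)"
  using assms
  unfolding partial_order_on_def preorder_on_def refl_on_def trans_def antisym_def pd_order_def
  by (auto intro: dvd_trans)

lemma partial_order_graph_pdg_adj:
  assumes "partial_order_on V (pd_order V)"
  shows "partial_order_graph V pdg_adj"
  unfolding partial_order_graph_def
  using assms by (intro exI[of _ "pd_order V"]) (auto simp: pdg_adj_def pd_order_def)

theorem lemma3p2:
  fixes ms :: "nat \<Rightarrow> 'a::comm_ring_1" and n :: nat
  assumes "n \<ge> 2"
    and "inj_on ms {0..<n}"
    and "\<And>i. i < n \<Longrightarrow> ms i \<noteq> 0 \<and> \<not> ms i dvd 1"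
    and "\<And>i j. i < n \<Longrightarrow> j < n \<Longrightarrow> i \<noteq> j \<Longrightarrow> bezout_coprime (ms i) (ms j)"
  shows "partial_order_on (perfect_divisors ms n) (pd_order (perfect_divisors ms n))
       \<and> card (perfect_divisors ms n) = 2 ^ n - 2
       \<and> partial_order_graph (perfect_divisors ms n) pdg_adj"
proof -
  have inj: "inj_on (prod ms) (Pow {0..<n})"
    by (rule inj_on_prod_Pow) (use assms(3,4) in auto)
  note V = perfect_divisors_eq_image[OF inj]
  have order: "partial_order_on (perfect_divisors ms n) (pd_order (perfect_divisors ms n))"
  proof (rule partial_order_on_pd_order)
    fix a b
    assume "a \<in> perfect_divisors ms n" "b \<in> perfect_divisors ms n" "a dvd b" "b dvd a"
    moreover have "perfect_divisors ms n \<subseteq> prod ms ` Pow {0..<n}"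
      unfolding V by (rule image_mono) blast
    ultimately show "a = b"
      by (intro dvd_antisym_on_prod_Pow[where ms = ms and I = "{0..<n}"])
        (use assms(3,4) in auto)
  qed
  moreover have "card (perfect_divisors ms n) = 2 ^ n - 2"
    unfolding V using inj_on_subset[OF inj]
    by (simp add: card_image card_Pow_minus_empty_and_full Diff_subset)
  moreover have "partial_order_graph (perfect_divisors ms n) pdg_adj"
    using order by (rule partial_order_graph_pdg_adj)
  ultimately show ?thesis
    by blast
qed

end
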